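(* Let $\{\omega_k\}_{k\ge 0}$, $\omega_k=(Z_k,E_k,-\lambda_k)$, be generated by the iteration below with parameters $(W_k,\theta_k,\beta_k)$ ($\theta_k,\beta_k$ entrywise positive). Then for every $k\ge 0$ and every triple $\omega=(Z,E,-\lambda)\in\mathbb{R}^{d\times n}\times\mathbb{R}^{m\times n}\times\mathbb{R}^{m\times n}$, with $u=(Z,E)$ and $u_{k+1}=(Z_{k+1},E_{k+1})$, $$h(u)-h(u_{k+1})+\big\langle \omega-\omega_{k+1},\ \mathcal{F}_k(\omega_{k+1})+\mathcal{G}_k(E_k-E_{k+1})+\mathcal{H}_k(\omega_{k+1}-\omega_k)\big\rangle\ \ge 0 .$$
   Context: Let $A\in\mathbb{R}^{m\times d}$, $X\in\mathbb{R}^{m\times n}$, and let $f:\mathbb{R}^{d\times n}\to\mathbb{R}$, $g:\mathbb{R}^{m\times n}\to\mathbb{R}$ be convex. Consider the problem $\min_{Z,E} f(Z)+g(E)$ subject to $X=AZ+E$, and write $h(u)=f(Z)+g(E)$ for $u=(Z,E)$. Triples are written $\omega=(Z,E,-\lambda)$ with $\lambda\in\mathbb{R}^{m\times n}$ a Lagrange multiplier; the inner product of triples is the sum of the componentwise Frobenius inner products. $\circ$ is the entrywise (Hadamard) product, and for an entrywise positive matrix $\beta$, $\beta^{-1}$ denotes its entrywise reciprocal. For a matrix $M$ and entrywise positive $\theta$ of the same size, write $\tfrac{\theta}{2}\circ\|M\|_F^2:=\tfrac12\sum_{ij}\theta_{ij}M_{ij}^2$. Iteration (D-LADMM): given $(Z_k,E_k,\lambda_k)$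 and parameters $W_k\in\mathbb{R}^{m\times d}$, $\theta_k\in\mathbb{R}^{d\times n}$, $\beta_k\in\mathbb{R}^{m\times n}$ with $\theta_k,\beta_k$ entrywise positive, $Z_{k+1}=\arg\min_Z\{ f(Z)+\tfrac{\theta_k}{2}\circ\|Z-Z_k+\theta_k^{-1}\circ W_k^\top(\lambda_k+\beta_k\circ(AZ_k+E_k-X))\|_F^2\}$, $E_{k+1}=\arg\min_E\{g(E)+\tfrac{\beta_k}{2}\circ\|E-X+AZ_{k+1}+\beta_k^{-1}\circ\lambda_k\|_F^2\}$, $\lambda_{k+1}=\lambda_k+\beta_k\circ(AZ_{k+1}+E_{k+1}-X)$. Operators: $\mathcal{D}_k(Z)=\theta_k\circ Z-W_k^\top(\beta_k\circ(AZ))$; $\mathcal{H}_k(Z,E,-\lambda)=(\mathcal{D}_k(Z),\ \beta_k\circ E,\ \beta_k^{-1}\circ(-\lambda))$; $\mathcal{F}_k(Z,E,-\lambda)=(W_k^\top\lambda,\ \lambda,\ AZ+E-X)$; for $M\in\mathbb{R}^{m\times n}$, $\mathcal{G}_k(M)=(W_k^\top(\beta_k\circ M),\ \beta_k\circ M,\ 0)$. Standing assumption of the paper: for $\sigma\ge0$, $\mathcal{S}(\sigma,A)$ is the set of triples $(W,\theta,\beta)$ with $\|W-A\|\le\sigma$ (spectral norm), $\theta,\beta$ entrywise positive, and the linear operator $Z\mapsto\theta\circ Z-W^\top(\beta\circ(AZ))$ positive definite (i.e. $\langle \cdot(Z),Z\rangle>0$ for all $Z\ne0$); it is assumed that there is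 a constant $c$ such that $\mathcal{S}(\sigma,A)\neq\emptyset$ for all $0\le\sigma\le c$. *)

theory Defs
  imports "HOL-Analysis.Analysis"
begin

text \<open>Matrices in R^{r x c} are represented as real^'c^'r (row index outer).
  Frobenius inner product is the library inner product on nested vec types;
  inner product of triples (Z,E,-lambda) is the product-type inner product
  on nested pairs (Z,(E,-lambda)).\<close>

definition had :: "real^'c^'r \<Rightarrow> real^'c^'r \<Rightarrow> real^'c^'r"  (infixl "\<odot>" 70) where
  "had x y = (\<chi> i j. x $ i $ j * y $ i $ j)"

definition erecip :: "real^'c^'r \<Rightarrow> real^'c^'r" where
  "erecip x = (\<chi> i j. 1 / (x $ i $ j))"

definition epos :: "real^'c^'r \<Rightarrow> bool" where
  "epos x \<longleftrightarrow> (\<forall>i j. x $ i $ j > 0)"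

definition wsq :: "real^'c^'r \<Rightarrow> real^'c^'r \<Rightarrow> real" where
  "wsq \<theta> M = (1/2) * (\<Sum>i\<in>UNIV. \<Sum>j\<in>UNIV. \<theta> $ i $ j * (M $ i $ j)^2)"

definition Dop :: "real^'d^'m \<Rightarrow> real^'n^'d \<Rightarrow> real^'n^'m \<Rightarrow> real^'d^'m \<Rightarrow> real^'n^'d \<Rightarrow> real^'n^'d" where
  "Dop W \<theta> \<beta> A Z = \<theta> \<odot> Z - transpose W ** (\<beta> \<odot> (A ** Z))"

definition Hop :: "real^'d^'m \<Rightarrow> real^'n^'d \<Rightarrow> real^'n^'m \<Rightarrow> real^'d^'m
     \<Rightarrow> (real^'n^'d) \<times> (real^'n^'m) \<times> (real^'n^'m) \<Rightarrow> (real^'n^'d) \<times> (real^'n^'m) \<times> (real^'n^'m)" where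
  "Hop W \<theta> \<beta> A w = (Dop W \<theta> \<beta> A (fst w), \<beta> \<odot> fst (snd w), erecip \<beta> \<odot> snd (snd w))"

text \<open>F_k(Z,E,-lambda) = (W^T lambda, lambda, AZ+E-X); the third slot of a triple stores -lambda.\<close>
definition Fop :: "real^'d^'m \<Rightarrow> real^'d^'m \<Rightarrow> real^'n^'m
     \<Rightarrow> (real^'n^'d) \<times> (real^'n^'m) \<times> (real^'n^'m) \<Rightarrow> (real^'n^'d) \<times> (real^'n^'m) \<times> (real^'n^'m)" where
  "Fop W A X w = (transpose W ** (- snd (snd w)), - snd (snd w), A ** fst w + fst (snd w) - X)"

definition Gop :: "real^'d^'m \<Rightarrow> real^'n^'m \<Rightarrow> real^'n^'m
     \<Rightarrow> (real^'n^'d) \<times> (real^'n^'m) \<times> (real^'n^'m)" where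
  "Gop W \<beta> M = (transpose W ** (\<beta> \<odot> M), \<beta> \<odot> M, 0)"

end

theory Submission imports Defs begin

text \<open>Both primal updates are proximal steps: a convex function plus a positively weighted
  quadratic is minimized. Comparing the minimizer with the points of the segment towards an
  arbitrary point yields the first-order variational inequality of each step. Rewritten through
  the multiplier update, the gradients of the two quadratics at the new iterate are exactly the
  Z- and E-components of \<open>F\<^sub>k + G\<^sub>k + H\<^sub>k\<close>, while its \<open>\<lambda>\<close>-component vanishes; summing the two
  inequalities gives the claim.\<close>

lemma had_erecip_cancel: "epos b \<Longrightarrow> b \<odot> (erecip b \<odot> x) = x"
  unfolding epos_def by (simp add: had_def erecip_def vec_eq_iff less_imp_neq[symmetric])

lemma erecip_had_cancel: "epos b \<Longrightarrow> erecip b \<odot> (b \<odot> x) = x"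
  unfolding epos_def by (simp add: had_def erecip_def vec_eq_iff less_imp_neq[symmetric])

lemma had_add_right: "a \<odot> (x + y) = a \<odot> x + a \<odot> y"
  by (simp add: had_def vec_eq_iff algebra_simps)

lemma had_diff_right: "a \<odot> (x - y) = a \<odot> x - a \<odot> y"
  by (simp add: had_def vec_eq_iff algebra_simps)

lemma matrix_diff_ldistrib: "(A::real^'n^'m) ** (B - C) = A ** B - A ** C"
  by (simp add: matrix_matrix_mult_def vec_eq_iff algebra_simps sum_subtractf)

lemma wsq_nonneg: "epos \<theta> \<Longrightarrow> wsq \<theta> D \<ge> 0"
  unfolding wsq_def epos_def by (intro mult_nonneg_nonneg sum_nonneg) (auto intro: less_imp_le)

lemma wsq_add_scaleR:
  "wsq \<theta> (M + t *\<^sub>R D) = wsq \<theta> M + t * ((\<theta> \<odot> M) \<bullet> D) + t\<^sup>2 * wsq \<theta> D"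
proof -
  have "\<theta>$i$j * ((M + t *\<^sub>R D)$i$j)\<^sup>2
      = \<theta>$i$j * (M$i$j)\<^sup>2 + 2 * t * (\<theta>$i$j * M$i$j * D$i$j) + t\<^sup>2 * (\<theta>$i$j * (D$i$j)\<^sup>2)" for i j
    by (simp add: power2_eq_square algebra_simps)
  then show ?thesis
    by (simp add: wsq_def inner_vec_def had_def sum.distrib sum_distrib_left algebra_simps)
qed

lemma convex_argmin_variational_ineq:
  fixes F :: "'a::real_vector \<Rightarrow> real"
  assumes cvx: "convex_on UNIV F" and opt: "\<And>y. F x + q x \<le> F y + q y"
    and q_quadratic: "\<And>t. q (x + t *\<^sub>R d) = q x + t * L + t\<^sup>2 * Q" and "Q \<ge> 0"
  shows "F (x + d) - F x + L \<ge> 0"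
proof (rule ccontr)
  define a where "a = F (x + d) - F x + L"
  assume "\<not> ?thesis"
  then have "a < 0" by (simp add: a_def)
  \<comment> \<open>a step of length \<open>t\<close> along \<open>d\<close> gains at least \<open>- t a\<close> and loses at most \<open>t\<^sup>2 Q\<close>\<close>
  define t where "t = min (1/2) (- a / (2 * Q + 1))"
  have t: "0 < t" "t < 1" "t * Q < - a"
  proof -
    show "0 < t" "t < 1" using \<open>a < 0\<close> \<open>Q \<ge> 0\<close> by (auto simp: t_def divide_neg_pos)
    have "t * Q \<le> (- a / (2 * Q + 1)) * Q" using \<open>Q \<ge> 0\<close> unfolding t_def by (intro mult_right_mono) auto
    also have "\<dots> < - a"
      using \<open>a < 0\<close> \<open>Q \<ge> 0\<close> by (simp add: field_simps add_neg_nonpos mult_nonneg_nonpos)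
    finally show "t * Q < - a" .
  qed
  have "F (x + t *\<^sub>R d) = F ((1 - t) *\<^sub>R x + t *\<^sub>R (x + d))"
    by (simp add: algebra_simps)
  also have "\<dots> \<le> (1 - t) * F x + t * F (x + d)"
    using convex_onD[OF cvx, of t x "x + d"] t by simp
  finally have "0 \<le> t * (a + t * Q)"
    using opt[of "x + t *\<^sub>R d"] q_quadratic[of t]
    by (simp add: a_def power2_eq_square algebra_simps)
  with t show False by (simp add: zero_le_mult_iff)
qed

lemma wsq_prox_variational_ineq:
  assumes "convex_on UNIV F" and "epos \<theta>"
    and "\<And>y. F x + wsq \<theta> (x + c) \<le> F y + wsq \<theta> (y + c)"
  shows "F y - F x + (\<theta> \<odot> (x + c)) \<bullet> (y - x) \<ge> 0"
proof -
  have "F (x + (y - x)) - F x + (\<theta> \<odot> (x + c)) \<bullet> (y - x) \<ge> 0"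
  proof (rule convex_argmin_variational_ineq[where q = "\<lambda>y. wsq \<theta> (y + c)"])
    show "wsq \<theta> (x + t *\<^sub>R (y - x) + c)
        = wsq \<theta> (x + c) + t * ((\<theta> \<odot> (x + c)) \<bullet> (y - x)) + t\<^sup>2 * wsq \<theta> (y - x)" for t
      using wsq_add_scaleR[of \<theta> "x + c" t "y - x"] by (simp add: algebra_simps)
  qed (use assms wsq_nonneg in auto)
  then show ?thesis by simp
qed

lemma Fop_Gop_Hop_eq_prox_gradients:
  fixes A W :: "real^'d::finite^'m::finite" and X E0 E1 L0 L1 :: "real^'n::finite^'m"
    and Z0 Z1 :: "real^'n^'d"
  assumes "epos \<theta>" and "epos \<beta>" and L1_eq: "L1 = L0 + \<beta> \<odot> (A ** Z1 + E1 - X)"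
  shows "Fop W A X (Z1, E1, - L1) + Gop W \<beta> (E0 - E1) + Hop W \<theta> \<beta> A ((Z1, E1, - L1) - (Z0, E0, - L0))
    = (\<theta> \<odot> (Z1 - Z0 + erecip \<theta> \<odot> (transpose W ** (L0 + \<beta> \<odot> (A ** Z0 + E0 - X)))),
       \<beta> \<odot> (E1 - X + A ** Z1 + erecip \<beta> \<odot> L0), 0)"
proof -
  have "transpose W ** L1 + transpose W ** (\<beta> \<odot> (E0 - E1)) + Dop W \<theta> \<beta> A (Z1 - Z0)
      = \<theta> \<odot> (Z1 - Z0 + erecip \<theta> \<odot> (transpose W ** (L0 + \<beta> \<odot> (A ** Z0 + E0 - X))))"
    unfolding Dop_def L1_eq
    by (simp add: had_add_right had_diff_right had_erecip_cancel[OF \<open>epos \<theta>\<close>]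
        matrix_add_ldistrib matrix_diff_ldistrib algebra_simps)
  moreover have "L1 + \<beta> \<odot> (E0 - E1) + \<beta> \<odot> (E1 - E0) = \<beta> \<odot> (E1 - X + A ** Z1 + erecip \<beta> \<odot> L0)"
    unfolding L1_eq
    by (simp add: had_add_right had_diff_right had_erecip_cancel[OF \<open>epos \<beta>\<close>] algebra_simps)
  moreover have "A ** Z1 + E1 - X + erecip \<beta> \<odot> (L0 - L1) = 0"
    unfolding L1_eq
    by (simp add: had_diff_right had_add_right erecip_had_cancel[OF \<open>epos \<beta>\<close>])
  ultimately show ?thesis
    by (simp add: Fop_def Gop_def Hop_def)
qed

theorem lemma1:
  fixes A :: "real^'d::finite^'m::finite" and X :: "real^'n::finite^'m"
    and f :: "real^'n^'d \<Rightarrow> real" and g :: "real^'n^'m \<Rightarrow> real"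
    and Zs :: "nat \<Rightarrow> real^'n^'d" and Es Ls :: "nat \<Rightarrow> real^'n^'m"
    and W :: "nat \<Rightarrow> real^'d^'m" and \<theta> :: "nat \<Rightarrow> real^'n^'d" and \<beta> :: "nat \<Rightarrow> real^'n^'m"
    and k :: nat and Z :: "real^'n^'d" and E L :: "real^'n^'m"
  assumes f_cvx: "convex_on UNIV f" and g_cvx: "convex_on UNIV g"
    and \<theta>_pos: "\<And>k. epos (\<theta> k)" and \<beta>_pos: "\<And>k. epos (\<beta> k)"
    and Z_step: "\<And>k Z'. f (Zs (Suc k)) + wsq (\<theta> k) (Zs (Suc k) - Zs k
              + erecip (\<theta> k) \<odot> (transpose (W k) ** (Ls k + \<beta> k \<odot> (A ** Zs k + Es k - X))))
            \<le> f Z' + wsq (\<theta> k) (Z' - Zs k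
              + erecip (\<theta> k) \<odot> (transpose (W k) ** (Ls k + \<beta> k \<odot> (A ** Zs k + Es k - X))))"
    and E_step: "\<And>k E'. g (Es (Suc k)) + wsq (\<beta> k) (Es (Suc k) - X + A ** Zs (Suc k) + erecip (\<beta> k) \<odot> Ls k)
            \<le> g E' + wsq (\<beta> k) (E' - X + A ** Zs (Suc k) + erecip (\<beta> k) \<odot> Ls k)"
    and L_step: "\<And>k. Ls (Suc k) = Ls k + \<beta> k \<odot> (A ** Zs (Suc k) + Es (Suc k) - X)"
  shows "let \<omega> = (Z, E, - L); \<omega>k = (Zs k, Es k, - Ls k); \<omega>k1 = (Zs (Suc k), Es (Suc k), - Ls (Suc k))
         in (f Z + g E) - (f (Zs (Suc k)) + g (Es (Suc k)))
            + (\<omega> - \<omega>k1) \<bullet> (Fop (W k) A X \<omega>k1 + Gop (W k) (\<beta> k) (Es k - Es (Suc k))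
                           + Hop (W k) (\<theta> k) (\<beta> k) A (\<omega>k1 - \<omega>k)) \<ge> 0"
proof -
  define Z0 Z1 E0 E1 L0 L1 where "Z0 = Zs k" and "Z1 = Zs (Suc k)" and "E0 = Es k"
    and "E1 = Es (Suc k)" and "L0 = Ls k" and "L1 = Ls (Suc k)"
  note iterates = Z0_def Z1_def E0_def E1_def L0_def L1_def
  have L1_eq: "L1 = L0 + \<beta> k \<odot> (A ** Z1 + E1 - X)"
    using L_step by (simp add: iterates)
  define cZ where "cZ = - Z0 + erecip (\<theta> k) \<odot> (transpose (W k) ** (L0 + \<beta> k \<odot> (A ** Z0 + E0 - X)))"
  define cE where "cE = - X + A ** Z1 + erecip (\<beta> k) \<odot> L0"
  have Z_shift: "Y - Z0 + erecip (\<theta> k) \<odot> (transpose (W k) ** (L0 + \<beta> k \<odot> (A ** Z0 + E0 - X)))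
      = Y + cZ" for Y
    by (simp add: cZ_def algebra_simps)
  have E_shift: "Y - X + A ** Z1 + erecip (\<beta> k) \<odot> L0 = Y + cE" for Y
    by (simp add: cE_def algebra_simps)
  have "f Z - f Z1 + (\<theta> k \<odot> (Z1 + cZ)) \<bullet> (Z - Z1) \<ge> 0"
    using Z_step[of k] unfolding iterates[symmetric] Z_shift
    by (rule wsq_prox_variational_ineq[OF f_cvx \<theta>_pos])
  moreover have "g E - g E1 + (\<beta> k \<odot> (E1 + cE)) \<bullet> (E - E1) \<ge> 0"
    using E_step[of k] unfolding iterates[symmetric] E_shift
    by (rule wsq_prox_variational_ineq[OF g_cvx \<beta>_pos])
  moreover have "Fop (W k) A X (Z1, E1, - L1) + Gop (W k) (\<beta> k) (E0 - E1)
      + Hop (W k) (\<theta> k) (\<beta> k) A ((Z1, E1, - L1) - (Z0, E0, - L0))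
      = (\<theta> k \<odot> (Z1 + cZ), \<beta> k \<odot> (E1 + cE), 0)"
    using Fop_Gop_Hop_eq_prox_gradients[OF \<theta>_pos \<beta>_pos L1_eq] by (simp only: Z_shift E_shift)
  ultimately show ?thesis
    unfolding Let_def iterates[symmetric] by (simp add: inner_commute)
qed

end
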